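(* Let $f,w\colon\mathbb{R}^d\to[0,\infty)$ be two proper log-concave functions such that $w$ is the John function of $f$ with respect to $w$. Assume in addition that for every $\xi\in(0,\|f\|_\infty)$ there is a positive position $g$ of $w$ with $g\le f$ and $\|g\|_\infty=\xi$. Then \[ \|w\|_\infty\le\|f\|_\infty\le e^d\,\|w\|_\infty. \]
   Context: A function $\mathbb{R}^d\to[0,\infty)$ is proper log-concave if it is upper semi-continuous, log-concave, with finite positive integral. Positions of $w$ are functions $x\mapsto\alpha\,w(Ax+a)$ with $A$ a non-singular real $d\times d$ matrix, $\alpha>0$, $a\in\mathbb{R}^d$; positive positions are those with $A$ positive definite. "$w$ is the John function of $f$ with respect to $w$" means $w\le f$ pointwise and $\int g\le\int w$ for every position $g$ of $w$ with $g\le f$. $\|\cdot\|_\infty$ is the supremum norm. *)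

theory Defs
  imports "HOL-Analysis.Analysis"
begin

definition usc_fun :: "(real^'d \<Rightarrow> real) \<Rightarrow> bool" where
  "usc_fun f \<longleftrightarrow> (\<forall>t::real. closed {x. t \<le> f x})"

definition log_concave_fun :: "(real^'d \<Rightarrow> real) \<Rightarrow> bool" where
  "log_concave_fun f \<longleftrightarrow> (\<forall>x y. \<forall>t\<in>{0<..<1::real}.
      f x powr t * f y powr (1 - t) \<le> f (t *\<^sub>R x + (1 - t) *\<^sub>R y))"

definition proper_log_concave :: "(real^'d \<Rightarrow> real) \<Rightarrow> bool" where
  "proper_log_concave f \<longleftrightarrow> (\<forall>x. 0 \<le> f x) \<and> usc_fun f \<and> log_concave_fun f
      \<and> integrable lborel f \<and> integral\<^sup>L lborel f > 0"

definition position_of :: "(real^'d \<Rightarrow> real) \<Rightarrow> (real^'d \<Rightarrow> real) \<Rightarrow> bool" where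
  "position_of g w \<longleftrightarrow> (\<exists>(A::real^'d^'d) (\<alpha>::real) (a::real^'d).
      invertible A \<and> \<alpha> > 0 \<and> g = (\<lambda>x. \<alpha> * w (A *v x + a)))"

definition pos_def_matrix :: "real^'d^'d \<Rightarrow> bool" where
  "pos_def_matrix A \<longleftrightarrow> transpose A = A \<and> (\<forall>x. x \<noteq> 0 \<longrightarrow> x \<bullet> (A *v x) > 0)"

definition positive_position_of :: "(real^'d \<Rightarrow> real) \<Rightarrow> (real^'d \<Rightarrow> real) \<Rightarrow> bool" where
  "positive_position_of g w \<longleftrightarrow> (\<exists>(A::real^'d^'d) (\<alpha>::real) (a::real^'d).
      pos_def_matrix A \<and> \<alpha> > 0 \<and> g = (\<lambda>x. \<alpha> * w (A *v x + a)))"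

definition john_function :: "(real^'d \<Rightarrow> real) \<Rightarrow> (real^'d \<Rightarrow> real) \<Rightarrow> bool" where
  "john_function w f \<longleftrightarrow> (\<forall>x. w x \<le> f x) \<and>
      (\<forall>g. position_of g w \<and> (\<forall>x. g x \<le> f x) \<longrightarrow> integral\<^sup>L lborel g \<le> integral\<^sup>L lborel w)"

definition sup_norm :: "(real^'d \<Rightarrow> real) \<Rightarrow> real" where
  "sup_norm f = Sup (range (\<lambda>x. \<bar>f x\<bar>))"

end

theory Submission
  imports Defs
begin

text \<open>
  The bound \<open>sup w \<le> sup f\<close> is immediate from \<open>w \<le> f\<close>. For the other one let \<open>W = sup w\<close>
  (finite, as \<open>w\<close> is log-concave and integrable), fix \<open>x\<^sub>0\<close> and \<open>0 < s < 1\<close>. Log-concavity of \<open>f\<close> puts the dilate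
  \<open>(f x\<^sub>0 / W)\<^bsup>1-s\<^esup> w (x\<^sub>0 + (x - x\<^sub>0) / s)\<close> of \<open>w\<close> about \<open>x\<^sub>0\<close> below \<open>f\<close>. It is a position of
  \<open>w\<close> with integral \<open>(f x\<^sub>0 / W)\<^bsup>1-s\<^esup> s\<^sup>d \<integral>w\<close>, so maximality of \<open>w\<close> gives
  \<open>(f x\<^sub>0 / W)\<^bsup>1-s\<^esup> s\<^sup>d \<le> 1\<close> for all \<open>s\<close>, and \<open>s \<rightarrow> 1\<close> yields \<open>f x\<^sub>0 \<le> e\<^sup>d W\<close>.
\<close>

lemma lborel_integrable_euclidean_affine:
  fixes f :: "'a::euclidean_space \<Rightarrow> 'b::{banach, second_countable_topology}"
  assumes f: "integrable lborel f" and c: "c \<noteq> 0"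
  shows "integrable lborel (\<lambda>x. f (t + c *\<^sub>R x))"
proof -
  have [measurable]: "f \<in> borel_measurable borel"
    using borel_measurable_integrable[OF f] by simp
  have "(\<integral>\<^sup>+x. ennreal (norm (f x)) \<partial>lborel)
      = ennreal (\<bar>c\<bar>^DIM('a)) * (\<integral>\<^sup>+x. ennreal (norm (f (t + c *\<^sub>R x))) \<partial>lborel)"
    by (subst lborel_affine[OF c, of t]) (simp add: nn_integral_density nn_integral_distr nn_integral_cmult)
  with f c show ?thesis
    unfolding integrable_iff_bounded by (auto simp: ennreal_mult_less_top)
qed

lemma lborel_integral_euclidean_affine:
  fixes f :: "'a::euclidean_space \<Rightarrow> 'b::{banach, second_countable_topology}"
  assumes f: "integrable lborel f" and c: "c \<noteq> 0"
  shows "(\<integral>x. f x \<partial>lborel) = \<bar>c\<bar>^DIM('a) *\<^sub>R (\<integral>x. f (t + c *\<^sub>R x) \<partial>lborel)"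
  using f c lborel_integrable_euclidean_affine[OF f c, of t] borel_measurable_integrable[OF f]
  by (subst lborel_affine[OF c, of t]) (simp add: integral_density integral_distr)

lemma min_one_le_sqrt: "0 \<le> a \<Longrightarrow> min a 1 \<le> sqrt a"
  by (smt (verit) divide_le_eq_1_pos real_div_sqrt real_sqrt_gt_zero real_sqrt_zero)

lemma le_powr_mult_powr:
  fixes a b s :: real
  assumes "0 \<le> a" "a \<le> b" "0 \<le> s" "s \<le> 1"
  shows "a \<le> a powr s * b powr (1 - s)"
proof (cases "a = 0")
  case False
  then have "a = a powr s * a powr (1 - s)"
    using assms(1) by (simp flip: powr_add)
  also have "\<dots> \<le> a powr s * b powr (1 - s)"
    using assms by (intro mult_left_mono powr_mono2) auto
  finally show ?thesis .
qed simp

lemma le_exp_if_powr_mult_power_le_one: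
  fixes c :: real and n :: nat
  assumes c: "0 < c" and le_one: "\<And>s. 0 < s \<Longrightarrow> s < 1 \<Longrightarrow> c powr (1 - s) * s ^ n \<le> 1"
  shows "c \<le> exp n"
proof -
  have "s * ln c \<le> n" if s: "0 < s" "s < 1" for s
  proof -
    have "ln (c powr (1 - s) * s ^ n) \<le> 0"
      using le_one[OF s] c s by simp
    then have "(1 - s) * ln c + n * ln s \<le> 0"
      using c s by (simp add: ln_mult ln_realpow)
    then have "(1 - s) * ln c \<le> n * (- ln s)"
      by simp
    also have "\<dots> \<le> n * ((1 - s) / s)"
      using ln_le_minus_one[of "1 / s"] s by (intro mult_left_mono) (simp_all add: ln_div field_simps)
    finally have "(1 - s) * ln c \<le> (1 - s) * (n / s)"
      by (simp add: mult.commute)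
    then have "ln c \<le> n / s"
      using s(2) by (meson mult_left_le_imp_le diff_gt_0_iff_gt)
    then show ?thesis
      using s by (simp add: field_simps)
  qed
  then have "ln c \<le> n"
    by (rule field_le_mult_one_interval)
  then show ?thesis
    using c by (metis exp_le_cancel_iff exp_ln)
qed

lemma log_concave_integrable_bdd_above:
  fixes w :: "real^'d \<Rightarrow> real"
  assumes nonneg: "\<And>x. 0 \<le> w x" and lc: "log_concave_fun w"
    and int: "integrable lborel w" and pos: "integral\<^sup>L lborel w > 0"
  shows "bdd_above (range w)"
proof -
  have [measurable]: "w \<in> borel_measurable borel"
    using borel_measurable_integrable[OF int] by simp
  have int_min: "integrable lborel (\<lambda>x. min (w x) 1)"
    by (rule Bochner_Integration.integrable_bound[OF int]) (auto simp: nonneg)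
  define J where "J = (\<integral>x. min (w x) 1 \<partial>lborel)"
  have "J \<noteq> 0"
  proof
    assume "J = 0"
    then have "AE x in lborel. min (w x) 1 = 0"
      unfolding J_def using integral_nonneg_eq_0_iff_AE[OF int_min] nonneg by simp
    then have "AE x in lborel. w x = 0"
      by (auto simp: min_def)
    then show False
      using pos by (simp add: integral_eq_zero_AE)
  qed
  moreover have "J \<ge> 0"
    unfolding J_def by (rule Bochner_Integration.integral_nonneg) (simp add: nonneg)
  ultimately have "J > 0" by simp
  show ?thesis
  proof (rule bdd_aboveI2)
    \<comment> \<open>integrate \<open>min (w x) 1 * sqrt (w z) \<le> w ((z + x) / 2)\<close> over \<open>x\<close>\<close>
    fix z
    let ?mid = "\<lambda>x. w ((1/2) *\<^sub>R z + (1/2) *\<^sub>R x)"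
    have "min (w x) 1 * sqrt (w z) \<le> ?mid x" for x
    proof -
      have "min (w x) 1 * sqrt (w z) \<le> w x powr (1/2) * w z powr (1 - 1/2)"
        using min_one_le_sqrt[OF nonneg[of x]] nonneg
        by (simp add: powr_half_sqrt mult_right_mono)
      also have "\<dots> \<le> ?mid x"
        using lc[unfolded log_concave_fun_def, rule_format, of "1/2" x z] by (simp add: add.commute)
      finally show ?thesis .
    qed
    then have "(\<integral>x. min (w x) 1 * sqrt (w z) \<partial>lborel) \<le> (\<integral>x. ?mid x \<partial>lborel)"
      using int_min by (intro integral_mono lborel_integrable_euclidean_affine[OF int]) auto
    then have "J * sqrt (w z) \<le> (\<integral>x. ?mid x \<partial>lborel)"
      unfolding J_def using int_min by simp
    also have "\<dots> = 2^CARD('d) * integral\<^sup>L lborel w"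
      using lborel_integral_euclidean_affine[OF int, of "1/2" "(1/2) *\<^sub>R z"]
      by (simp add: power_one_over)
    finally have "sqrt (w z) \<le> 2^CARD('d) * integral\<^sup>L lborel w / J"
      using \<open>J > 0\<close> by (simp add: field_simps)
    then have "(sqrt (w z))\<^sup>2 \<le> (2^CARD('d) * integral\<^sup>L lborel w / J)\<^sup>2"
      by (rule power_mono) (simp add: nonneg)
    then show "w z \<le> (2^CARD('d) * integral\<^sup>L lborel w / J)\<^sup>2"
      using nonneg[of z] by simp
  qed
qed

lemma position_of_scaled_translate:
  fixes w :: "real^'d \<Rightarrow> real"
  assumes "0 < \<alpha>" and "c \<noteq> 0"
  shows "position_of (\<lambda>x. \<alpha> * w (a + c *\<^sub>R x)) w"
proof -
  have "invertible (mat 1 :: real^'d^'d)"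
    unfolding invertible_def by (metis matrix_mul_lid)
  then have "invertible (c *\<^sub>R mat 1 :: real^'d^'d)"
    using \<open>c \<noteq> 0\<close> by (rule scalar_invertible[rotated])
  moreover have "(c *\<^sub>R mat 1 :: real^'d^'d) *v x = c *\<^sub>R x" for x
    by (metis matrix_vector_mul_lid scaleR_matrix_vector_assoc)
  ultimately show ?thesis
    unfolding position_of_def using \<open>0 < \<alpha>\<close>
    by (intro exI[of _ "c *\<^sub>R mat 1"] exI[of _ \<alpha>] exI[of _ a]) (simp add: add.commute)
qed

lemma log_concave_dilation_le:
  fixes f w :: "real^'d \<Rightarrow> real"
  assumes lc: "log_concave_fun f" and nonneg: "\<And>x. 0 \<le> w x" and below: "\<And>x. w x \<le> f x"
    and bound: "\<And>x. w x \<le> W" and "0 < W" and s: "0 < s" "s < 1"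
  shows "(f x0 / W) powr (1 - s) * w (x0 + (1/s) *\<^sub>R (x - x0)) \<le> f x"
proof -
  define z where "z = x0 + (1/s) *\<^sub>R (x - x0)"
  have x: "x = s *\<^sub>R z + (1 - s) *\<^sub>R x0"
    using s by (simp add: z_def algebra_simps)
  have f_x0: "0 \<le> f x0"
    using nonneg below order_trans by blast
  have "(f x0 / W) powr (1 - s) * w z \<le> (f x0 / W) powr (1 - s) * (w z powr s * W powr (1 - s))"
    using le_powr_mult_powr[OF nonneg bound] s by (intro mult_left_mono) auto
  also have "\<dots> = w z powr s * f x0 powr (1 - s)"
    using \<open>0 < W\<close> f_x0 by (simp add: powr_divide)
  also have "\<dots> \<le> f z powr s * f x0 powr (1 - s)"
    using below nonneg s by (intro mult_right_mono powr_mono2) auto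
  also have "\<dots> \<le> f x"
    using lc s unfolding log_concave_fun_def x by simp
  finally show ?thesis
    unfolding z_def .
qed

lemma john_function_dilation_le_one:
  fixes f w :: "real^'d \<Rightarrow> real"
  assumes john: "john_function w f" and lc: "log_concave_fun f"
    and nonneg: "\<And>x. 0 \<le> w x" and int: "integrable lborel w" and pos: "integral\<^sup>L lborel w > 0"
    and bound: "\<And>x. w x \<le> W" and "0 < W" and s: "0 < s" "s < 1"
  shows "(f x0 / W) powr (1 - s) * s ^ CARD('d) \<le> 1"
proof (cases "f x0 = 0")
  case False
  define c where "c = (f x0 / W) powr (1 - s)"
  define a where "a = x0 - (1/s) *\<^sub>R x0"
  define g where "g x = c * w (a + (1/s) *\<^sub>R x)" for x
  have below: "\<And>x. w x \<le> f x"
    using john unfolding john_function_def by blast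
  have "0 < c"
    using False \<open>0 < W\<close> by (simp add: c_def)
  then have "position_of g w"
    unfolding g_def[abs_def] using s by (intro position_of_scaled_translate) auto
  moreover have "g x \<le> f x" for x
    using log_concave_dilation_le[OF lc nonneg below bound \<open>0 < W\<close> s, of x0 x]
    by (simp add: g_def c_def a_def algebra_simps)
  ultimately have "integral\<^sup>L lborel g \<le> integral\<^sup>L lborel w"
    using john unfolding john_function_def by blast
  moreover have "integral\<^sup>L lborel g = c * s ^ CARD('d) * integral\<^sup>L lborel w"
  proof -
    have "(\<integral>x. w (a + (1/s) *\<^sub>R x) \<partial>lborel) = s ^ CARD('d) * integral\<^sup>L lborel w"
      using lborel_integral_euclidean_affine[OF int, of "1/s" a] s by (simp add: field_simps)
    then show ?thesis
      by (simp add: g_def[abs_def])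
  qed
  ultimately show ?thesis
    using pos by (simp add: c_def)
qed simp

lemma john_function_le_exp_bound:
  fixes f w :: "real^'d \<Rightarrow> real"
  assumes john: "john_function w f" and lc: "log_concave_fun f"
    and nonneg: "\<And>x. 0 \<le> w x" and int: "integrable lborel w" and pos: "integral\<^sup>L lborel w > 0"
    and bound: "\<And>x. w x \<le> W"
  shows "f x \<le> exp CARD('d) * W"
proof -
  have "0 < W"
  proof (rule ccontr)
    assume "\<not> 0 < W"
    then have "w = (\<lambda>_. 0)"
      using bound nonneg by (intro ext) (meson antisym not_less order_trans)
    with pos show False
      by simp
  qed
  have "0 \<le> f x"
    using john nonneg unfolding john_function_def by (meson order_trans)
  then consider "f x = 0" | "0 < f x / W"
    using \<open>0 < W\<close> by fastforce
  then show ?thesis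
  proof cases
    case 2
    then have "f x / W \<le> exp CARD('d)"
      by (rule le_exp_if_powr_mult_power_le_one)
        (rule john_function_dilation_le_one[OF assms \<open>0 < W\<close>])
    with \<open>0 < W\<close> show ?thesis
      by (simp add: field_simps)
  qed (simp add: \<open>0 < W\<close> less_imp_le)
qed

theorem lemmaA4:
  fixes f w :: "real^'d \<Rightarrow> real"
  assumes "proper_log_concave f" and "proper_log_concave w"
    and "john_function w f"
    and "\<forall>\<xi>\<in>{0<..<sup_norm f}. \<exists>g. positive_position_of g w \<and> (\<forall>x. g x \<le> f x) \<and> sup_norm g = \<xi>"
  shows "sup_norm w \<le> sup_norm f \<and> sup_norm f \<le> exp (real CARD('d)) * sup_norm w"
proof -
  have f: "log_concave_fun f" "\<And>x. 0 \<le> f x"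
    and w: "\<And>x. 0 \<le> w x" "log_concave_fun w" "integrable lborel w" "integral\<^sup>L lborel w > 0"
    using assms(1,2) unfolding proper_log_concave_def by auto
  have below: "\<And>x. w x \<le> f x"
    using assms(3) unfolding john_function_def by blast
  have "bdd_above (range w)"
    using log_concave_integrable_bdd_above[OF w] .
  define W where "W = Sup (range w)"
  have "w x \<le> W" for x
    unfolding W_def using \<open>bdd_above (range w)\<close> by (simp add: cSUP_upper)
  then have f_le: "f x \<le> exp CARD('d) * W" for x
    using john_function_le_exp_bound[OF assms(3) f(1) w(1,3,4)] by blast
  have "sup_norm w = W" "sup_norm f = Sup (range f)"
    unfolding sup_norm_def W_def using w(1) f(2) by simp_all
  moreover have "W \<le> Sup (range f)"
    unfolding W_def using below f_le by (intro cSUP_mono bdd_aboveI2) auto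
  moreover have "Sup (range f) \<le> exp CARD('d) * W"
    using f_le by (intro cSUP_least) auto
  ultimately show ?thesis
    by simp
qed

end
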